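(* Suppose processes know neither $n$ nor any upper bound $D$ on the network causal diameter, i.e., the algorithm executed by the processes does not depend on $n$ or $D$. Then there is no deterministic algorithm that solves consensus in every run (for every number of processes $n\ge2$, every assignment of input values, and every sequence of communication graphs satisfying Assumption 1 for some positive integer $D$).
   Context: Model: a finite set $\Pi$ of $n\ge2$ processes runs a deterministic algorithm in synchronous lock-step rounds $r=1,2,\dots$. An adversary fixes an infinite sequence of simple directed graphs $\mathcal{G}^1,\mathcal{G}^2,\dots$ on vertex set $\Pi$; $(p\to q)\in\mathcal{G}^r$ iff $q$ receives $p$'s round-$r$ message in round $r$. In round $r$ each process broadcasts a message determined by its current state (received exactly by its out-neighbours in $\mathcal{G}^r$), then computes its new state from its current state and the set of (sender, message) pairs received in round $r$. Consensus: each process $p$ starts with an input value $v_p$ from an ordered set $V$ with at least two elements and may irrevocably decide; Agreement: any two decided values are equal; Validity: every decided value is some process's input; Termination: every process eventually decides. Causality: $p$ causally influences $q$ in round $t$ if $q=p$ or $(p\to q)\in\mathcal{G}^t$; a causal chain of length $k\ge1$ from $p$ in round $t$ to $q$ is a sequence $p=p_0,\dots,p_k=q$ with $p_i$ causally influencing $p_{i+1}$ in round $t+i$; $d_t(p,q)$ is the least such $k$ ($\infty$ if none). A root component of $\mathcal{G}^t$ is a strongly connected component $\mathcal{R}$ with no edge $(q\to p)$, $p\in\mathcal{R}$, $q\notin\mathcal{R}$. For an interval $I=[r,s]$, an $I$-vertex-stable root component is a set $\mathcal{R}\subseteq\Pi$ that is a root component of $\mathcal{G}^t$ for every $t\in I$.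 When each $\mathcal{G}^x$ has a unique root component $\mathcal{R}^x$, the network causal diameter of round $x$ is $D^x=\max\{d_x(p,q):p\in\mathcal{R}^x,q\in\Pi\}$, and for $I=[r,s]$, $D^I=\max\{D^x:x\in I,\ x+D^x-1\le s\}$ ($\infty$ if empty). An $I$-vertex-stable root component with $I=[r,s]$ is $D$-bounded if $D\ge D^I$ and $D^{s-D+1}\le D$. Assumption 1 (parameter $D$): every $\mathcal{G}^r$ has exactly one root component; every $I$-vertex-stable root component with $|I|\ge D$ is $D$-bounded; and there is an interval $J=[r_{ST},r_{ST}+d]$ with $d>4D$ such that there is a $D$-bounded $J$-vertex-stable root component. *)

theory Defs
  imports Main "HOL-Library.Extended_Nat"
begin

text \<open>A communication pattern is a sequence of directed graphs G r (r = 1, 2, ...),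
  each given by its edge set; (p, q) in G r means q receives p's round-r message.
  G 0 is irrelevant.\<close>

type_synonym graphs = "nat \<Rightarrow> (nat \<times> nat) set"

definition simple_graphs :: "nat set \<Rightarrow> graphs \<Rightarrow> bool" where
  "simple_graphs Pi G \<longleftrightarrow> (\<forall>r\<ge>1. G r \<subseteq> Pi \<times> Pi \<and> (\<forall>p. (p, p) \<notin> G r))"

text \<open>An algorithm (independent of n and D) is given by
  an initial-state function ini (own identifier, own input),
  a message function msg (state to broadcast message),
  a transition function trn (current state, set of received (sender, message) pairs),
  and a decision output dec (state to optional value).\<close>

fun run_state :: "(nat \<Rightarrow> 'v \<Rightarrow> 's) \<Rightarrow> ('s \<Rightarrow> 'm) \<Rightarrow> ('s \<Rightarrow> (nat \<times> 'm) set \<Rightarrow> 's)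
     \<Rightarrow> nat set \<Rightarrow> (nat \<Rightarrow> 'v) \<Rightarrow> graphs \<Rightarrow> nat \<Rightarrow> nat \<Rightarrow> 's" where
  "run_state ini msg trn Pi inp G 0 p = ini p (inp p)"
| "run_state ini msg trn Pi inp G (Suc r) p =
     trn (run_state ini msg trn Pi inp G r p)
       {(q, msg (run_state ini msg trn Pi inp G r q)) | q. q \<in> Pi \<and> (q, p) \<in> G (Suc r)}"

text \<open>Decisions are irrevocable: the decided value of p is the first value ever output.\<close>

definition decides :: "(nat \<Rightarrow> 'v \<Rightarrow> 's) \<Rightarrow> ('s \<Rightarrow> 'm) \<Rightarrow> ('s \<Rightarrow> (nat \<times> 'm) set \<Rightarrow> 's)
     \<Rightarrow> ('s \<Rightarrow> 'v option) \<Rightarrow> nat set \<Rightarrow> (nat \<Rightarrow> 'v) \<Rightarrow> graphs \<Rightarrow> nat \<Rightarrow> 'v \<Rightarrow> bool" where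
  "decides ini msg trn dec Pi inp G p v \<longleftrightarrow>
     (\<exists>r. dec (run_state ini msg trn Pi inp G r p) = Some v \<and>
          (\<forall>r'<r. dec (run_state ini msg trn Pi inp G r' p) = None))"

definition consensus_run :: "(nat \<Rightarrow> 'v \<Rightarrow> 's) \<Rightarrow> ('s \<Rightarrow> 'm) \<Rightarrow> ('s \<Rightarrow> (nat \<times> 'm) set \<Rightarrow> 's)
     \<Rightarrow> ('s \<Rightarrow> 'v option) \<Rightarrow> nat set \<Rightarrow> (nat \<Rightarrow> 'v) \<Rightarrow> graphs \<Rightarrow> bool" where
  "consensus_run ini msg trn dec Pi inp G \<longleftrightarrow>
     (\<forall>p\<in>Pi. \<forall>q\<in>Pi. \<forall>v w. decides ini msg trn dec Pi inp G p v
          \<longrightarrow> decides ini msg trn dec Pi inp G q w \<longrightarrow> v = w)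
   \<and> (\<forall>p\<in>Pi. \<forall>v. decides ini msg trn dec Pi inp G p v \<longrightarrow> v \<in> inp ` Pi)
   \<and> (\<forall>p\<in>Pi. \<exists>v. decides ini msg trn dec Pi inp G p v)"

definition causal_infl :: "graphs \<Rightarrow> nat \<Rightarrow> nat \<Rightarrow> nat \<Rightarrow> bool" where
  "causal_infl G t p q \<longleftrightarrow> q = p \<or> (p, q) \<in> G t"

fun causal_chain :: "graphs \<Rightarrow> nat \<Rightarrow> nat \<Rightarrow> nat \<Rightarrow> nat \<Rightarrow> bool" where
  "causal_chain G t 0 p q = (p = q)"
| "causal_chain G t (Suc k) p q = (\<exists>p'. causal_infl G t p p' \<and> causal_chain G (Suc t) k p' q)"

definition causal_dist :: "graphs \<Rightarrow> nat \<Rightarrow> nat \<Rightarrow> nat \<Rightarrow> enat" where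
  "causal_dist G t p q =
     (if \<exists>k\<ge>1. causal_chain G t k p q then enat (LEAST k. k \<ge> 1 \<and> causal_chain G t k p q)
      else \<infinity>)"

definition strongly_connected_comp :: "nat set \<Rightarrow> graphs \<Rightarrow> nat \<Rightarrow> nat set \<Rightarrow> bool" where
  "strongly_connected_comp Pi G t R \<longleftrightarrow>
     R \<noteq> {} \<and> R \<subseteq> Pi \<and>
     (\<forall>p\<in>R. \<forall>q\<in>R. (p, q) \<in> (G t)\<^sup>*) \<and>
     (\<forall>p\<in>R. \<forall>q\<in>Pi. (p, q) \<in> (G t)\<^sup>* \<and> (q, p) \<in> (G t)\<^sup>* \<longrightarrow> q \<in> R)"

definition root_comp :: "nat set \<Rightarrow> graphs \<Rightarrow> nat \<Rightarrow> nat set \<Rightarrow> bool" where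
  "root_comp Pi G t R \<longleftrightarrow>
     strongly_connected_comp Pi G t R \<and> (\<forall>p\<in>R. \<forall>q. q \<notin> R \<longrightarrow> (q, p) \<notin> G t)"

definition the_root :: "nat set \<Rightarrow> graphs \<Rightarrow> nat \<Rightarrow> nat set" where
  "the_root Pi G t = (THE R. root_comp Pi G t R)"

text \<open>Network causal diameter D^x of round x (meaningful when the root component is unique).\<close>

definition net_diam :: "nat set \<Rightarrow> graphs \<Rightarrow> nat \<Rightarrow> enat" where
  "net_diam Pi G x = Max {causal_dist G x p q | p q. p \<in> the_root Pi G x \<and> q \<in> Pi}"

definition int_diam :: "nat set \<Rightarrow> graphs \<Rightarrow> nat \<Rightarrow> nat \<Rightarrow> enat" where
  "int_diam Pi G r s =
     (let X = {net_diam Pi G x | x. r \<le> x \<and> x \<le> s \<and> enat x + net_diam Pi G x - 1 \<le> enat s}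
      in if X = {} then \<infinity> else Max X)"

definition vertex_stable :: "nat set \<Rightarrow> graphs \<Rightarrow> nat \<Rightarrow> nat \<Rightarrow> nat set \<Rightarrow> bool" where
  "vertex_stable Pi G r s R \<longleftrightarrow> (\<forall>t. r \<le> t \<and> t \<le> s \<longrightarrow> root_comp Pi G t R)"

definition D_bounded :: "nat set \<Rightarrow> graphs \<Rightarrow> nat \<Rightarrow> nat \<Rightarrow> nat \<Rightarrow> nat set \<Rightarrow> bool" where
  "D_bounded Pi G D r s R \<longleftrightarrow>
     vertex_stable Pi G r s R \<and> int_diam Pi G r s \<le> enat D \<and> net_diam Pi G (s + 1 - D) \<le> enat D"

definition assumption1 :: "nat set \<Rightarrow> graphs \<Rightarrow> nat \<Rightarrow> bool" where
  "assumption1 Pi G D \<longleftrightarrow>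
     (\<forall>r\<ge>1. \<exists>!R. root_comp Pi G r R)
   \<and> (\<forall>r s R. 1 \<le> r \<and> r \<le> s \<and> s + 1 - r \<ge> D \<and> vertex_stable Pi G r s R \<longrightarrow> D_bounded Pi G D r s R)
   \<and> (\<exists>rST d R. rST \<ge> 1 \<and> d > 4 * D \<and> D_bounded Pi G D rST (rST + d) R)"

definition solves_consensus :: "(nat \<Rightarrow> 'v \<Rightarrow> 's) \<Rightarrow> ('s \<Rightarrow> 'm) \<Rightarrow> ('s \<Rightarrow> (nat \<times> 'm) set \<Rightarrow> 's)
     \<Rightarrow> ('s \<Rightarrow> 'v option) \<Rightarrow> bool" where
  "solves_consensus ini msg trn dec \<longleftrightarrow>
     (\<forall>Pi inp G D. finite Pi \<and> card Pi \<ge> 2 \<and> simple_graphs Pi G \<and> D \<ge> 1 \<and> assumption1 Pi G D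
        \<longrightarrow> consensus_run ini msg trn dec Pi inp G)"

end

theory Submission
  imports Defs
begin

text \<open>If all inputs are a, process 0 as the centre of a two-process star hears nothing, yet by
  validity it must decide a by some round T. Now take processes 0..N with N = T + 1, linked by
  the path 0 \<rightarrow> 1 \<rightarrow> \<dots> \<rightarrow> N in rounds 1..T and by a star centred at N afterwards; this
  satisfies Assumption 1 with D = T + 1, which the algorithm cannot know. With input a at 0 and
  b elsewhere, process 0 again hears nothing up to round T and decides a. Process N is never
  causally influenced by 0, so it cannot distinguish this run from the one with all inputs b,
  where it decides b: agreement fails.\<close>

lemma root_comp_source_iff:
  assumes "c \<in> Pi" and source: "\<forall>q. (q, c) \<notin> G t" and reach: "\<forall>p\<in>Pi. (c, p) \<in> (G t)\<^sup>*"
  shows "root_comp Pi G t R \<longleftrightarrow> R = {c}"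
proof -
  have to_c: "p = c" if "(p, c) \<in> (G t)\<^sup>*" for p
    using that by (rule rtranclE) (use source in auto)
  show ?thesis
  proof
    assume R: "root_comp Pi G t R"
    then obtain p where "p \<in> R" "R \<subseteq> Pi"
      unfolding root_comp_def strongly_connected_comp_def by blast
    then have "(c, p) \<in> (G t)\<^sup>*" using reach by blast
    then have "c \<in> R"
    proof (induction rule: converse_rtrancl_induct)
      case base
      show ?case using \<open>p \<in> R\<close> .
    next
      case (step x y)
      then show ?case using R unfolding root_comp_def by blast
    qed
    moreover have "q = c" if "q \<in> R" for q
      using R \<open>c \<in> R\<close> that to_c unfolding root_comp_def strongly_connected_comp_def by blast
    ultimately show "R = {c}" by blast
  next
    assume "R = {c}"
    then show "root_comp Pi G t R"
      unfolding root_comp_def strongly_connected_comp_def using \<open>c \<in> Pi\<close> source to_c by auto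
  qed
qed

lemma causal_dist_le_1:
  assumes "causal_infl G t p q"
  shows "causal_dist G t p q \<le> 1"
proof -
  have chain: "causal_chain G t 1 p q" using assms by simp
  then have "(LEAST k. k \<ge> 1 \<and> causal_chain G t k p q) \<le> 1"
    by (intro Least_le) simp
  then show ?thesis unfolding causal_dist_def using chain by (auto simp: one_enat_def)
qed

lemma net_diam_source_le_1:
  assumes "finite Pi" "c \<in> Pi" "\<forall>q. (q, c) \<notin> G t"
    and infl: "\<forall>q\<in>Pi. causal_infl G t c q"
  shows "net_diam Pi G t \<le> 1"
proof -
  have "\<forall>p\<in>Pi. (c, p) \<in> (G t)\<^sup>*" using infl by (auto simp: causal_infl_def)
  then have "root_comp Pi G t R \<longleftrightarrow> R = {c}" for R
    using assms(2,3) by (rule root_comp_source_iff[rotated -1])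
  then have "the_root Pi G t = {c}" by (auto simp: the_root_def intro!: the_equality)
  then have "{causal_dist G t p q | p q. p \<in> the_root Pi G t \<and> q \<in> Pi} = causal_dist G t c ` Pi"
    by auto
  moreover have "Max (causal_dist G t c ` Pi) \<le> 1"
    using assms infl causal_dist_le_1 by (subst Max_le_iff) auto
  ultimately show ?thesis unfolding net_diam_def by simp
qed

lemma int_diam_le_1:
  assumes "r \<le> s" and diam: "\<And>x. r \<le> x \<Longrightarrow> x \<le> s \<Longrightarrow> net_diam Pi G x \<le> 1"
  shows "int_diam Pi G r s \<le> 1"
proof -
  define X where
    "X = {net_diam Pi G x | x. r \<le> x \<and> x \<le> s \<and> enat x + net_diam Pi G x - 1 \<le> enat s}"
  have "enat r + net_diam Pi G r - 1 \<le> enat s"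
    using diam[of r] \<open>r \<le> s\<close> by (cases "net_diam Pi G r") (auto simp: one_enat_def)
  then have "X \<noteq> {}" using \<open>r \<le> s\<close> unfolding X_def by blast
  moreover have "finite X"
    by (rule finite_subset[of _ "net_diam Pi G ` {r..s}"]) (auto simp: X_def)
  moreover have "\<forall>y\<in>X. y \<le> 1" using diam unfolding X_def by blast
  ultimately show ?thesis unfolding int_diam_def X_def[symmetric] by simp
qed

lemma D_bounded_if_net_diam_le_1:
  assumes diam: "\<forall>x>T. net_diam Pi G x \<le> 1" and "vertex_stable Pi G r s R"
    and "T < r" "r \<le> s" "D \<le> s + 1 - r" "1 \<le> D"
  shows "D_bounded Pi G D r s R"
proof -
  have "int_diam Pi G r s \<le> 1" using assms by (intro int_diam_le_1) auto
  moreover have "net_diam Pi G (s + 1 - D) \<le> 1" using assms by auto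
  moreover have "(1::enat) \<le> enat D" using \<open>1 \<le> D\<close> by (simp add: one_enat_def)
  ultimately show ?thesis
    unfolding D_bounded_def using \<open>vertex_stable Pi G r s R\<close> by (meson order_trans)
qed

lemma assumption1_if_root_settles:
  assumes unique: "\<forall>t\<ge>1. \<exists>!R. root_comp Pi G t R"
    and settled: "\<forall>t>T. root_comp Pi G t R"
    and unsettled: "\<forall>t. 1 \<le> t \<and> t \<le> T \<longrightarrow> \<not> root_comp Pi G t R"
    and diam: "\<forall>t>T. net_diam Pi G t \<le> 1"
    and "T < D"
  shows "assumption1 Pi G D"
proof -
  have stable_bounded: "D_bounded Pi G D r s R'"
    if "1 \<le> r" "r \<le> s" "D \<le> s + 1 - r" and stable: "vertex_stable Pi G r s R'" for r s R'
  proof -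
    have "T < s" using that \<open>T < D\<close> by linarith
    moreover have "root_comp Pi G s R'" using stable \<open>r \<le> s\<close> by (simp add: vertex_stable_def)
    moreover have "\<exists>!R. root_comp Pi G s R" using unique that by simp
    ultimately have "R' = R" using settled by blast
    then have "T < r" using unsettled stable that unfolding vertex_stable_def by (meson not_less order_refl)
    then show ?thesis using D_bounded_if_net_diam_le_1[OF diam stable] that \<open>T < D\<close> by auto
  qed
  have "D_bounded Pi G D (T + 1) (T + 1 + (4 * D + 1)) R"
    using settled \<open>T < D\<close> by (intro D_bounded_if_net_diam_le_1[OF diam]) (auto simp: vertex_stable_def)
  then have "\<exists>rST d R. rST \<ge> 1 \<and> d > 4 * D \<and> D_bounded Pi G D rST (rST + d) R"
    by (intro exI[of _ "T + 1"] exI[of _ "4 * D + 1"]) auto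
  then show ?thesis unfolding assumption1_def using unique stable_bounded by blast
qed

lemma causal_chain_snoc:
  "causal_chain G t k p q \<Longrightarrow> causal_infl G (t + k) q q' \<Longrightarrow> causal_chain G t (Suc k) p q'"
  by (induction k arbitrary: t p) auto

lemma run_state_determined_by_causal_past:
  assumes "\<forall>q. causal_chain G 1 r q p \<longrightarrow> inp1 q = inp2 q"
  shows "run_state ini msg trn Pi inp1 G r p = run_state ini msg trn Pi inp2 G r p"
  using assms
proof (induction r arbitrary: p)
  case 0
  then show ?case by simp
next
  case (Suc r)
  have past: "run_state ini msg trn Pi inp1 G r q = run_state ini msg trn Pi inp2 G r q"
    if "causal_infl G (Suc r) q p" for q
    using Suc causal_chain_snoc[of G 1 r _ q p] that by simp
  then have "{(q, msg (run_state ini msg trn Pi inp1 G r q)) | q. q \<in> Pi \<and> (q, p) \<in> G (Suc r)} =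
      {(q, msg (run_state ini msg trn Pi inp2 G r q)) | q. q \<in> Pi \<and> (q, p) \<in> G (Suc r)}"
    unfolding causal_infl_def by force
  with past[of p] show ?case by (simp add: causal_infl_def)
qed

lemma run_state_isolated:
  assumes "\<And>t q. 1 \<le> t \<Longrightarrow> t \<le> k \<Longrightarrow> (q, p) \<notin> G t"
  shows "run_state ini msg trn Pi inp G k p = ((\<lambda>s. trn s {}) ^^ k) (ini p (inp p))"
  using assms
proof (induction k)
  case 0
  then show ?case by simp
next
  case (Suc k)
  then have "{(q, msg (run_state ini msg trn Pi inp G k q)) | q. q \<in> Pi \<and> (q, p) \<in> G (Suc k)} = {}"
    using Suc.prems[of "Suc k"] by auto
  with Suc show ?case by simp
qed

lemma solves_consensusD:
  assumes "solves_consensus ini msg trn dec" "finite Pi" "card Pi \<ge> 2" "simple_graphs Pi G"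
    "1 \<le> D" "assumption1 Pi G D"
  shows "consensus_run ini msg trn dec Pi inp G"
  using assms unfolding solves_consensus_def by blast

lemma unanimous_decides:
  assumes "consensus_run ini msg trn dec Pi (\<lambda>_. v) G" "p \<in> Pi"
  shows "decides ini msg trn dec Pi (\<lambda>_. v) G p v"
  using assms unfolding consensus_run_def by fastforce

definition star_graph :: "nat set \<Rightarrow> nat \<Rightarrow> (nat \<times> nat) set" where
  "star_graph P c = {(c, i) | i. i \<in> P \<and> i \<noteq> c}"

lemma star_graph_root_comp_iff:
  assumes "G t = star_graph Pi c" "c \<in> Pi"
  shows "root_comp Pi G t R \<longleftrightarrow> R = {c}"
  using assms by (intro root_comp_source_iff) (auto simp: star_graph_def intro: r_into_rtrancl)

lemma star_graph_net_diam_le_1: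
  assumes "G t = star_graph Pi c" "finite Pi" "c \<in> Pi"
  shows "net_diam Pi G t \<le> 1"
  using assms by (intro net_diam_source_le_1) (auto simp: star_graph_def causal_infl_def)

lemma simple_graphs_star_graph: "c \<in> Pi \<Longrightarrow> simple_graphs Pi (\<lambda>_. star_graph Pi c)"
  by (auto simp: simple_graphs_def star_graph_def)

lemma assumption1_star_graph:
  assumes "finite Pi" "c \<in> Pi"
  shows "assumption1 Pi (\<lambda>_. star_graph Pi c) 1"
  using assms star_graph_root_comp_iff star_graph_net_diam_le_1
  by (intro assumption1_if_root_settles[where T = 0 and R = "{c}"]) auto

definition path_graph :: "nat \<Rightarrow> (nat \<times> nat) set" where
  "path_graph N = {(i, Suc i) | i. i < N}"

definition path_then_star :: "nat \<Rightarrow> nat \<Rightarrow> graphs" where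
  "path_then_star N T t = (if t \<le> T then path_graph N else star_graph {0..N} N)"

lemma path_graph_reach: "p \<le> N \<Longrightarrow> (0, p) \<in> (path_graph N)\<^sup>*"
proof (induction p)
  case 0
  show ?case by simp
next
  case (Suc p)
  then have "(p, Suc p) \<in> path_graph N" unfolding path_graph_def by auto
  with Suc show ?case by (meson Suc_leD rtrancl_into_rtrancl)
qed

lemma path_then_star_root_comp_iff:
  "root_comp {0..N} (path_then_star N T) t R \<longleftrightarrow> R = {if t \<le> T then 0 else N}"
proof (cases "t \<le> T")
  case True
  then show ?thesis
    using path_graph_reach[of _ N, unfolded path_graph_def]
    by (simp, intro root_comp_source_iff) (auto simp: path_then_star_def path_graph_def)
next
  case False
  then show ?thesis by (simp add: star_graph_root_comp_iff path_then_star_def)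
qed

lemma simple_graphs_path_then_star: "simple_graphs {0..N} (path_then_star N T)"
  by (auto simp: simple_graphs_def path_then_star_def path_graph_def star_graph_def)

lemma assumption1_path_then_star:
  assumes "T < N"
  shows "assumption1 {0..N} (path_then_star N T) (Suc T)"
  using assms path_then_star_root_comp_iff[of N T]
  by (intro assumption1_if_root_settles[where T = T and R = "{N}"])
    (auto intro: star_graph_net_diam_le_1 simp: path_then_star_def)

lemma path_then_star_no_chain_to_centre:
  assumes "T < N"
  shows "\<not> causal_chain (path_then_star N T) 1 k 0 N"
proof -
  \<comment> \<open>Path edges advance a chain by one process per round, and after round T only N sends.\<close>
  have "q < N" if "causal_chain (path_then_star N T) t k p q" "p < t" "p < N" for t k p q
    using that
  proof (induction k arbitrary: t p)
    case 0
    then show ?case by simp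
  next
    case (Suc k)
    then obtain p' where "causal_infl (path_then_star N T) t p p'"
      and "causal_chain (path_then_star N T) (Suc t) k p' q" by auto
    moreover have "p' < Suc t \<and> p' < N" using calculation(1) Suc.prems(2,3) \<open>T < N\<close>
      by (auto simp: causal_infl_def path_then_star_def path_graph_def star_graph_def split: if_splits)
    ultimately show ?case using Suc.IH by blast
  qed
  then show ?thesis using assms by fastforce
qed

theorem theorem3:
  fixes ini :: "nat \<Rightarrow> 'v::linorder \<Rightarrow> 's"
    and msg :: "'s \<Rightarrow> 'm"
    and trn :: "'s \<Rightarrow> (nat \<times> 'm) set \<Rightarrow> 's"
    and dec :: "'s \<Rightarrow> 'v option"
  assumes "\<exists>a b :: 'v. a \<noteq> b"
  shows "\<not> solves_consensus ini msg trn dec"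
proof
  assume solves: "solves_consensus ini msg trn dec"
  obtain a b :: 'v where "a \<noteq> b" using assms by blast
  define solo where "solo = run_state ini msg trn {0, 1} (\<lambda>_. a) (\<lambda>_. star_graph {0, 1} 0)"
  have "consensus_run ini msg trn dec {0, 1} (\<lambda>_. a) (\<lambda>_. star_graph {0, 1} 0)"
    by (rule solves_consensusD[OF solves _ _ simple_graphs_star_graph _ assumption1_star_graph]) auto
  then have "decides ini msg trn dec {0, 1} (\<lambda>_. a) (\<lambda>_. star_graph {0, 1} 0) 0 a"
    by (rule unanimous_decides) simp
  then obtain T where T: "dec (solo T 0) = Some a" "\<forall>r<T. dec (solo r 0) = None"
    unfolding decides_def solo_def by blast
  define N where "N = Suc T"
  define inp where "inp = (\<lambda>p::nat. if p = 0 then a else b)"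
  have runs: "consensus_run ini msg trn dec {0..N} inp' (path_then_star N T)" for inp'
    by (rule solves_consensusD[OF solves _ _ simple_graphs_path_then_star _ assumption1_path_then_star])
      (auto simp: N_def)
  have "run_state ini msg trn {0..N} inp (path_then_star N T) r 0 = solo r 0" if "r \<le> T" for r
    using that unfolding solo_def
    by (simp add: run_state_isolated path_then_star_def path_graph_def star_graph_def inp_def)
  then have "decides ini msg trn dec {0..N} inp (path_then_star N T) 0 a"
    using T unfolding decides_def by (intro exI[of _ T]) simp
  moreover have "run_state ini msg trn {0..N} inp (path_then_star N T) r N =
      run_state ini msg trn {0..N} (\<lambda>_. b) (path_then_star N T) r N" for r
    using path_then_star_no_chain_to_centre[of T N]
    by (intro run_state_determined_by_causal_past) (auto simp: inp_def N_def)
  then have "decides ini msg trn dec {0..N} inp (path_then_star N T) N b"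
    using unanimous_decides[OF runs, of N] unfolding decides_def by simp
  moreover have "0 \<in> {0..N}" "N \<in> {0..N}" by simp_all
  ultimately have "a = b" using runs[of inp] unfolding consensus_run_def by blast
  with \<open>a \<noteq> b\<close> show False ..
qed

end
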